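(* Let $\ell>1$, $m_c\ge0$ with $4m_c^2\ge(3\ell-1)^2$, and $M=\frac{\sqrt{4m_c^2-(1-3\ell)^2}}{2(\ell-1)}$. Then there is a constant $C$ such that for all $z\in[1,\infty)$ $$\int_0^{z-1}\Big|\big((1+z)^2-y^2\big)^{-1/2}F\Big(\tfrac12+iM,\tfrac12+iM;1;\tfrac{(z-1)^2-y^2}{(z+1)^2-y^2}\Big)\Big|\,dy\le C(1+\ln z)^{1-\operatorname{sgn}M}.$$
   Context: $F(a,b;c;\zeta)$ is Gauss's hypergeometric function; $\operatorname{sgn}M=1$ if $M>0$, $0$ if $M=0$. *)

theory Defs
  imports "HOL-Analysis.Analysis"
begin

text \<open>Gauss hypergeometric function F(a,b;c;z), defined by its power series
  (used only for |z| < 1, where the series converges).\<close>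
definition hyp2F1 :: "complex \<Rightarrow> complex \<Rightarrow> complex \<Rightarrow> complex \<Rightarrow> complex" where
  "hyp2F1 a b c z =
     (\<Sum>n. pochhammer a n * pochhammer b n / (pochhammer c n * of_nat (fact n)) * z ^ n)"

end

theory Submission
  imports Defs
begin

text \<open>
  Put \<open>a = 1/2 + \<i>M\<close>. The Taylor coefficients \<open>c\<^sub>n = ((a)\<^sub>n / n!)\<^sup>2\<close> of \<open>F(a,a;1;x)\<close> are
  \<open>O(1/n)\<close>, because \<open>(a)\<^sub>n / n! \<sim> n\<^bsup>a-1\<^esup> / \<Gamma>(a)\<close>; summing \<open>x\<^sup>n/(n+1)\<close> gives
  \<open>|F(x)| = O(1 - ln (1 - x))\<close>. If \<open>M \<noteq> 0\<close>, the recursion for \<open>c\<^sub>n\<close> yields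
  \<open>(n+1) c\<^sub>n\<^sub>+\<^sub>1 - n c\<^sub>n = (2a - 1) c\<^sub>n + (a - 1)\<^sup>2 c\<^sub>n / (n+1)\<close>, so the partial sums of \<open>\<Sum> c\<^sub>n\<close>
  telescope up to an absolutely convergent remainder and stay bounded; by Abel summation
  \<open>F\<close> is then bounded on \<open>[0,1)\<close>. On the integration range the argument of \<open>F\<close> lies in
  \<open>[0, 1 - 1/z]\<close>, so \<open>1 - ln (1 - x) \<le> 1 + ln z\<close>, and the kernel
  \<open>((1+z)\<^sup>2 - y\<^sup>2)\<^bsup>-1/2\<^esup> \<le> ((z+1)(z+1-y))\<^bsup>-1/2\<^esup>\<close> has integral at most 2.
\<close>

lemma norm_pochhammer_div_fact_le:
  fixes a :: complex
  assumes "Re a > 0"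
  obtains K where "\<And>n. n \<ge> 1 \<Longrightarrow> norm (pochhammer a n / fact n) \<le> K * real n powr (Re a - 1)"
proof -
  obtain R where R: "\<And>n. norm (rGamma_series a n) \<le> R"
    using convergent_imp_Bseq[OF convergentI[OF rGamma_series_LIMSEQ]] by (auto simp: Bseq_def)
  have "norm (pochhammer a n / fact n) \<le> R * real n powr (Re a - 1)" if "n \<ge> 1" for n
  proof -
    have n: "real n > 0" using that by simp
    have "norm (exp (a * of_real (ln (real n)))) = real n powr Re a"
      using n by (simp add: norm_exp_eq_Re powr_def)
    then have rGamma: "norm (pochhammer a n / fact n) * norm (a + of_nat n) =
        norm (rGamma_series a n) * real n powr Re a"
      using n unfolding rGamma_series_def by (simp add: pochhammer_rec' norm_mult norm_divide)
    have "real n \<le> norm (a + of_nat n)"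
      using complex_Re_le_cmod[of "a + of_nat n"] assms by simp
    then have "norm (pochhammer a n / fact n) * real n \<le>
        norm (pochhammer a n / fact n) * norm (a + of_nat n)"
      by (simp add: mult_left_mono)
    also have "\<dots> \<le> R * real n powr Re a"
      unfolding rGamma by (simp add: R mult_right_mono)
    finally show ?thesis
      using n by (simp add: powr_diff field_simps)
  qed
  then show ?thesis by (rule that)
qed

definition hyp2F1_coeff :: "complex \<Rightarrow> nat \<Rightarrow> complex" where
  "hyp2F1_coeff a n = (pochhammer a n / fact n) ^ 2"

lemma hyp2F1_same_params_one: "hyp2F1 a a 1 z = (\<Sum>n. hyp2F1_coeff a n * z ^ n)"
  unfolding hyp2F1_def hyp2F1_coeff_def pochhammer_fact[symmetric]
  by (simp add: power2_eq_square)

lemma hyp2F1_coeff_Suc: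
  "hyp2F1_coeff a (Suc n) = hyp2F1_coeff a n * (a + of_nat n) ^ 2 / of_nat (Suc n) ^ 2"
  unfolding hyp2F1_coeff_def by (simp add: pochhammer_rec' power2_eq_square field_simps)

lemma norm_hyp2F1_coeff_le:
  assumes "Re a = 1/2"
  obtains K where "\<And>n. norm (hyp2F1_coeff a n) \<le> K / (real n + 1)"
proof -
  obtain K where K: "\<And>n. n \<ge> 1 \<Longrightarrow> norm (pochhammer a n / fact n) \<le> K * real n powr (-1/2)"
    using norm_pochhammer_div_fact_le[of a] assms by auto
  have "norm (hyp2F1_coeff a n) \<le> max 1 (2 * K\<^sup>2) / (real n + 1)" for n
  proof (cases "n = 0")
    case False
    then have n: "real n \<ge> 1" by simp
    have "norm (hyp2F1_coeff a n) \<le> (K * real n powr (-1/2))\<^sup>2"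
      unfolding hyp2F1_coeff_def norm_power using K[of n] False by (simp add: power_mono)
    also have "\<dots> = K\<^sup>2 / real n"
      using n by (simp add: power_divide powr_power powr_minus_divide)
    also have "\<dots> \<le> 2 * K\<^sup>2 / (real n + 1)"
      using n mult_right_mono[of 1 "real n" "K\<^sup>2"] by (simp add: field_simps)
    also have "\<dots> \<le> max 1 (2 * K\<^sup>2) / (real n + 1)"
      by (simp add: divide_right_mono)
    finally show ?thesis .
  qed (simp add: hyp2F1_coeff_def)
  then show ?thesis by (rule that)
qed

lemma norm_power_series_le_partial_sums_bound:
  fixes c :: "nat \<Rightarrow> 'a::real_normed_field"
  assumes x: "0 \<le> x" "x < 1" and summable: "summable (\<lambda>n. c n * of_real x ^ n)"
    and partial_sums: "\<And>N. norm (\<Sum>k<N. c k) \<le> B"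
  shows "norm (\<Sum>n. c n * of_real x ^ n) \<le> B"
proof -
  define S where "S N = (\<Sum>k<N. c k)" for N
  have "norm (\<Sum>k<N. c k * of_real x ^ k) \<le> B" for N
  proof -
    have summation_by_parts: "(\<Sum>k<N. c k * of_real x ^ k) =
        S N * of_real x ^ N + (\<Sum>k<N. S (Suc k) * of_real (x ^ k - x ^ Suc k))"
      by (induction N) (simp_all add: S_def algebra_simps)
    have first: "norm (S N * of_real x ^ N) \<le> B * x ^ N"
      using x partial_sums by (simp add: S_def norm_mult norm_power mult_right_mono)
    have "norm (\<Sum>k<N. S (Suc k) * of_real (x ^ k - x ^ Suc k)) \<le> (\<Sum>k<N. B * (x ^ k - x ^ Suc k))"
    proof (rule sum_norm_le)
      fix k
      have "x ^ Suc k \<le> x ^ k" using x by (simp add: mult_left_le_one_le)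
      then have "norm (S (Suc k) * of_real (x ^ k - x ^ Suc k)) = norm (S (Suc k)) * (x ^ k - x ^ Suc k)"
        unfolding norm_mult norm_of_real by simp
      also have "\<dots> \<le> B * (x ^ k - x ^ Suc k)"
        unfolding S_def by (rule mult_right_mono[OF partial_sums]) (use \<open>x ^ Suc k \<le> x ^ k\<close> in simp)
      finally show "norm (S (Suc k) * of_real (x ^ k - x ^ Suc k)) \<le> B * (x ^ k - x ^ Suc k)" .
    qed
    also have "\<dots> = B * (1 - x ^ N)"
      by (simp add: sum_distrib_left[symmetric] sum_lessThan_telescope' del: power_Suc)
    finally have rest: "norm (\<Sum>k<N. S (Suc k) * of_real (x ^ k - x ^ Suc k)) \<le> B * (1 - x ^ N)" .
    have "norm (\<Sum>k<N. c k * of_real x ^ k) \<le>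
        norm (S N * of_real x ^ N) + norm (\<Sum>k<N. S (Suc k) * of_real (x ^ k - x ^ Suc k))"
      unfolding summation_by_parts by (rule norm_triangle_ineq)
    also have "\<dots> \<le> B * x ^ N + B * (1 - x ^ N)"
      using first rest by (rule add_mono)
    finally show ?thesis
      by (simp add: algebra_simps)
  qed
  moreover have "(\<lambda>N. norm (\<Sum>k<N. c k * of_real x ^ k)) \<longlonglongrightarrow> norm (\<Sum>n. c n * of_real x ^ n)"
    by (intro tendsto_norm summable_LIMSEQ summable)
  ultimately show ?thesis
    using LIMSEQ_le_const2 by blast
qed

lemma hyp2F1_coeff_partial_sums_bounded:
  assumes "Re a = 1/2" and "a \<noteq> 1/2"
  obtains B where "\<And>N. norm (\<Sum>k<N. hyp2F1_coeff a k) \<le> B"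
proof -
  define c where "c = hyp2F1_coeff a"
  obtain K where K: "\<And>n. norm (c n) \<le> K / (real n + 1)"
    using norm_hyp2F1_coeff_le[OF assms(1)] unfolding c_def by blast
  then have "K \<ge> 0"
    using order_trans[OF norm_ge_zero K[of 0]] by simp
  have "2 * a - 1 \<noteq> 0"
    using assms(2) by (auto simp: complex_eq_iff)
  have step: "of_nat (Suc n) * c (Suc n) - of_nat n * c n =
      (2 * a - 1) * c n + (a - 1)\<^sup>2 * (c n / of_nat (Suc n))" for n
  proof -
    have "(1 + m) * (b * (a + m)\<^sup>2 / (1 + m)\<^sup>2) - m * b =
        (2 * a - 1) * b + (a - 1)\<^sup>2 * (b / (1 + m))" if "1 + m \<noteq> 0" for m b :: complex
    proof -
      have "(1 + m) * (b * (a + m)\<^sup>2 / (1 + m)\<^sup>2) = b * (a + m)\<^sup>2 / (1 + m)"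
        using that by (simp add: power2_eq_square)
      moreover have "b * (a + m)\<^sup>2 = (m * b + (2 * a - 1) * b) * (1 + m) + (a - 1)\<^sup>2 * b"
        by (simp add: algebra_simps power2_eq_square)
      ultimately show ?thesis
        using that by (simp add: add_divide_distrib)
    qed
    moreover have "1 + of_nat n \<noteq> (0::complex)"
      by (metis of_nat_Suc of_nat_eq_0_iff nat.distinct(1))
    ultimately show ?thesis
      unfolding c_def hyp2F1_coeff_Suc of_nat_Suc by blast
  qed
  have telescoped: "(2 * a - 1) * (\<Sum>k<N. c k) =
      of_nat N * c N - (a - 1)\<^sup>2 * (\<Sum>k<N. c k / of_nat (Suc k))" for N
  proof -
    have "of_nat N * c N = (\<Sum>k<N. of_nat (Suc k) * c (Suc k) - of_nat k * c k)"
      by (subst sum_lessThan_telescope) simp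
    also have "\<dots> = (2 * a - 1) * (\<Sum>k<N. c k) + (a - 1)\<^sup>2 * (\<Sum>k<N. c k / of_nat (Suc k))"
      unfolding step by (simp add: sum.distrib sum_distrib_left)
    finally show ?thesis
      by (simp add: algebra_simps)
  qed
  have boundary_term: "norm (of_nat N * c N) \<le> K" for N
  proof -
    have "norm (of_nat N * c N) \<le> real N * (K / (real N + 1))"
      unfolding norm_mult norm_of_nat by (rule mult_left_mono[OF K]) simp
    also have "\<dots> \<le> K"
      using \<open>K \<ge> 0\<close> by (simp add: field_simps)
    finally show ?thesis .
  qed
  have remainder: "norm (\<Sum>k<N. c k / of_nat (Suc k)) \<le> K * (pi\<^sup>2 / 6)" for N
  proof -
    have "norm (\<Sum>k<N. c k / of_nat (Suc k)) \<le> (\<Sum>k<N. K * (1 / (real k + 1)\<^sup>2))"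
    proof (rule sum_norm_le)
      fix k
      have "norm (c k / of_nat (Suc k)) = norm (c k) / (real k + 1)"
        unfolding norm_divide norm_of_nat by simp
      also have "\<dots> \<le> K / (real k + 1) / (real k + 1)"
        by (rule divide_right_mono[OF K]) simp
      finally show "norm (c k / of_nat (Suc k)) \<le> K * (1 / (real k + 1)\<^sup>2)"
        by (simp add: power2_eq_square)
    qed
    also have "\<dots> = K * (\<Sum>k<N. 1 / (real k + 1)\<^sup>2)"
      by (simp add: sum_distrib_left)
    also have "\<dots> \<le> K * (pi\<^sup>2 / 6)"
    proof (rule mult_left_mono[OF _ \<open>K \<ge> 0\<close>])
      show "(\<Sum>k<N. 1 / (real k + 1)\<^sup>2) \<le> pi\<^sup>2 / 6"
        using sum_le_suminf[OF sums_summable[OF inverse_squares_sums], of "{..<N}"]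
        unfolding sums_unique[OF inverse_squares_sums, symmetric] by (simp add: add.commute)
    qed
    finally show ?thesis .
  qed
  have "norm (\<Sum>k<N. c k) \<le> (K + norm ((a - 1)\<^sup>2) * (K * (pi\<^sup>2 / 6))) / norm (2 * a - 1)" for N
  proof -
    have "norm (2 * a - 1) * norm (\<Sum>k<N. c k) \<le>
        norm (of_nat N * c N) + norm ((a - 1)\<^sup>2) * norm (\<Sum>k<N. c k / of_nat (Suc k))"
      by (metis norm_mult norm_triangle_ineq4 telescoped)
    also have "\<dots> \<le> K + norm ((a - 1)\<^sup>2) * (K * (pi\<^sup>2 / 6))"
      by (intro add_mono mult_left_mono boundary_term remainder norm_ge_zero)
    finally show ?thesis
      using \<open>2 * a - 1 \<noteq> 0\<close> by (simp add: field_simps)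
  qed
  then show ?thesis
    using that unfolding c_def by blast
qed

lemma summable_norm_hyp2F1_same_params_one:
  assumes "Re a = 1/2" and "norm z < 1"
  shows "summable (\<lambda>n. norm (hyp2F1_coeff a n * z ^ n))"
proof -
  obtain K where K: "\<And>n. norm (hyp2F1_coeff a n) \<le> K / (real n + 1)"
    using norm_hyp2F1_coeff_le[OF assms(1)] by blast
  have "K \<ge> 0"
    using K[of 0] by (simp add: hyp2F1_coeff_def)
  have "norm (hyp2F1_coeff a n) * 1 ^ n \<le> K" for n
    using K[of n] divide_left_mono[of 1 "real n + 1" K] \<open>K \<ge> 0\<close> by simp
  then have "summable (\<lambda>n. norm (hyp2F1_coeff a n) * norm z ^ n)"
    using assms(2) by (intro Abel_lemma[of _ 1]) auto
  then show ?thesis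
    by (simp add: norm_mult norm_power)
qed

lemma norm_hyp2F1_same_params_one_bounded:
  assumes "Re a = 1/2" and "a \<noteq> 1/2"
  obtains B where "\<And>x::real. 0 \<le> x \<Longrightarrow> x < 1 \<Longrightarrow> norm (hyp2F1 a a 1 (of_real x)) \<le> B"
proof -
  obtain B where B: "\<And>N. norm (\<Sum>k<N. hyp2F1_coeff a k) \<le> B"
    using hyp2F1_coeff_partial_sums_bounded[OF assms] by blast
  have "norm (hyp2F1 a a 1 (of_real x)) \<le> B" if "0 \<le> x" "x < 1" for x :: real
    unfolding hyp2F1_same_params_one
  proof (rule norm_power_series_le_partial_sums_bound[OF that _ B])
    show "summable (\<lambda>n. hyp2F1_coeff a n * of_real x ^ n)"
      by (rule summable_norm_cancel, rule summable_norm_hyp2F1_same_params_one[OF assms(1)]) (use that in simp)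
  qed
  then show ?thesis by (rule that)
qed

lemma norm_hyp2F1_same_params_one_le_log:
  assumes "Re a = 1/2"
  obtains K where "\<And>x::real. 0 \<le> x \<Longrightarrow> x < 1 \<Longrightarrow> norm (hyp2F1 a a 1 (of_real x)) \<le> K * (1 - ln (1 - x))"
proof -
  obtain K where K: "\<And>n. norm (hyp2F1_coeff a n) \<le> K / (real n + 1)"
    using norm_hyp2F1_coeff_le[OF assms(1)] by blast
  have "K \<ge> 0"
    using K[of 0] by (simp add: hyp2F1_coeff_def)
  have "norm (hyp2F1 a a 1 (of_real x)) \<le> K * (1 - ln (1 - x))" if x: "0 \<le> x" "x < 1" for x :: real
  proof -
    have summable: "summable (\<lambda>n. norm (hyp2F1_coeff a n * of_real x ^ n))"
      using x by (intro summable_norm_hyp2F1_same_params_one assms) auto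
    have "(\<lambda>n. x ^ n / real n) sums (- ln (1 - x))"
      using sums_minus[OF ln_series'[of "-x"]] x by simp
    from sums_mult[OF sums_add[OF this sums_single[of 0 "\<lambda>_. 1"]], of K]
    have majorant: "(\<lambda>n. K * (x ^ n / real n + (if n = 0 then 1 else 0))) sums (K * (1 - ln (1 - x)))"
      by simp
    have "norm (hyp2F1 a a 1 (of_real x)) \<le> (\<Sum>n. norm (hyp2F1_coeff a n * of_real x ^ n))"
      unfolding hyp2F1_same_params_one by (rule summable_norm[OF summable])
    also have "\<dots> \<le> K * (1 - ln (1 - x))"
    proof (rule sums_le[OF _ summable_sums[OF summable] majorant])
      fix n
      have "norm (hyp2F1_coeff a n * of_real x ^ n) = norm (hyp2F1_coeff a n) * x ^ n"
        using x by (simp add: norm_mult norm_power)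
      also have "\<dots> \<le> K / (real n + 1) * x ^ n"
        by (rule mult_right_mono[OF K]) (use x in simp)
      also have "\<dots> \<le> K * (x ^ n / real n + (if n = 0 then 1 else 0))"
        using \<open>K \<ge> 0\<close> x by (cases "n = 0") (auto intro!: mult_left_mono divide_left_mono)
      finally show "norm (hyp2F1_coeff a n * of_real x ^ n) \<le> K * (x ^ n / real n + (if n = 0 then 1 else 0))" .
    qed
    finally show ?thesis .
  qed
  then show ?thesis by (rule that)
qed

lemma norm_hyp2F1_critical_line_le:
  fixes M :: real
  assumes "M \<ge> 0"
  obtains A where "\<And>z x. 1 \<le> z \<Longrightarrow> 0 \<le> x \<Longrightarrow> x \<le> 1 - 1/z \<Longrightarrow>
    norm (hyp2F1 (1/2 + \<i> * of_real M) (1/2 + \<i> * of_real M) 1 (of_real x)) \<le> A * (1 + ln z) powr (1 - sgn M)"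
proof -
  let ?a = "1/2 + \<i> * of_real M"
  have ln_pos: "1 + ln z > 0" if "1 \<le> z" for z :: real
    using ln_ge_zero[OF that] by linarith
  have below_one: "x < 1" if "1 \<le> z" "x \<le> 1 - 1/z" for z x :: real
  proof -
    have "1/z > 0" using that(1) by simp
    then show ?thesis using that(2) by linarith
  qed
  show ?thesis
  proof (cases "M = 0")
    case True
    obtain K where K: "\<And>x::real. 0 \<le> x \<Longrightarrow> x < 1 \<Longrightarrow> norm (hyp2F1 ?a ?a 1 (of_real x)) \<le> K * (1 - ln (1 - x))"
      using norm_hyp2F1_same_params_one_le_log[of ?a] by auto
    have "K \<ge> 0"
      using order_trans[OF norm_ge_zero K[of 0]] by simp
    have "norm (hyp2F1 ?a ?a 1 (of_real x)) \<le> K * (1 + ln z) powr (1 - sgn M)"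
      if z: "1 \<le> z" and x: "0 \<le> x" "x \<le> 1 - 1/z" for z x :: real
    proof -
      have "x < 1"
        using below_one z x(2) .
      have "ln (1/z) \<le> ln (1 - x)"
        using z x \<open>x < 1\<close> by (subst ln_le_cancel_iff) auto
      then have "1 - ln (1 - x) \<le> 1 + ln z"
        using z by (simp add: ln_div)
      have "norm (hyp2F1 ?a ?a 1 (of_real x)) \<le> K * (1 - ln (1 - x))"
        by (rule K[OF x(1) \<open>x < 1\<close>])
      also have "\<dots> \<le> K * (1 + ln z)"
        by (rule mult_left_mono) fact+
      also have "\<dots> = K * (1 + ln z) powr (1 - sgn M)"
        using True ln_pos[OF z] by simp
      finally show ?thesis .
    qed
    then show ?thesis by (rule that)
  next
    case False
    then have "?a \<noteq> 1/2"
      by (simp add: complex_eq_iff)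
    then obtain B where B: "\<And>x::real. 0 \<le> x \<Longrightarrow> x < 1 \<Longrightarrow> norm (hyp2F1 ?a ?a 1 (of_real x)) \<le> B"
      using norm_hyp2F1_same_params_one_bounded[of ?a] by auto
    have "norm (hyp2F1 ?a ?a 1 (of_real x)) \<le> B * (1 + ln z) powr (1 - sgn M)"
      if z: "1 \<le> z" and x: "0 \<le> x" "x \<le> 1 - 1/z" for z x :: real
      using B[OF x(1) below_one[OF z x(2)]] ln_pos[OF z] False assms by simp
    then show ?thesis by (rule that)
  qed
qed

lemma hyp2F1_argument_bounds:
  fixes y z :: real
  assumes z: "1 \<le> z" and y: "0 \<le> y" "y \<le> z - 1"
  shows "0 \<le> ((z - 1)\<^sup>2 - y\<^sup>2) / ((z + 1)\<^sup>2 - y\<^sup>2)"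
    and "((z - 1)\<^sup>2 - y\<^sup>2) / ((z + 1)\<^sup>2 - y\<^sup>2) \<le> 1 - 1/z"
proof -
  define w where "w = (z + 1)\<^sup>2 - y\<^sup>2"
  have "y\<^sup>2 \<le> (z - 1)\<^sup>2"
    using y by (intro power_mono) auto
  then have "4 * z \<le> w"
    unfolding w_def by (simp add: power2_eq_square algebra_simps)
  have "(z + 1)\<^sup>2 \<le> (2 * z)\<^sup>2"
    using z by (intro power_mono) auto
  then have "w \<le> 4 * z\<^sup>2"
    unfolding w_def by (simp add: power_mult_distrib) (smt (verit) zero_le_power2)
  have quotient: "((z - 1)\<^sup>2 - y\<^sup>2) / ((z + 1)\<^sup>2 - y\<^sup>2) = 1 - 4 * z / w"
    using \<open>4 * z \<le> w\<close> z unfolding w_def by (simp add: field_simps power2_eq_square)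
  show "0 \<le> ((z - 1)\<^sup>2 - y\<^sup>2) / ((z + 1)\<^sup>2 - y\<^sup>2)"
    unfolding quotient using \<open>4 * z \<le> w\<close> z by simp
  have "1 / z = 4 * z / (4 * z\<^sup>2)"
    using z by (simp add: power2_eq_square)
  also have "\<dots> \<le> 4 * z / w"
    using \<open>4 * z \<le> w\<close> \<open>w \<le> 4 * z\<^sup>2\<close> z by (intro divide_left_mono) auto
  finally show "((z - 1)\<^sup>2 - y\<^sup>2) / ((z + 1)\<^sup>2 - y\<^sup>2) \<le> 1 - 1/z"
    unfolding quotient by simp
qed

lemma nn_integral_inverse_sqrt_le:
  fixes z P :: real
  assumes "1 \<le> z" and "0 \<le> P"
  shows "(\<integral>\<^sup>+ y \<in> {0..z - 1}. ennreal (P / sqrt ((z + 1) * (z + 1 - y))) \<partial>lborel) \<le> ennreal (2 * P)"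
proof -
  define G where "G y = - 2 * P * sqrt (z + 1 - y) / sqrt (z + 1)" for y
  have "(G has_real_derivative P / sqrt ((z + 1) * (z + 1 - y))) (at y)" if "y \<in> {0..z - 1}" for y
  proof -
    have "z + 1 - y > 0" using that by auto
    have "((\<lambda>y. z + 1 - y) has_real_derivative (0 - 1)) (at y)"
      by (auto intro!: derivative_eq_intros)
    from DERIV_chain2[OF DERIV_real_sqrt[OF \<open>z + 1 - y > 0\<close>] this]
    have "((\<lambda>y. sqrt (z + 1 - y)) has_real_derivative inverse (sqrt (z + 1 - y)) / 2 * (0 - 1)) (at y)" .
    then have "(G has_real_derivative - 2 * P * (inverse (sqrt (z + 1 - y)) / 2 * (0 - 1)) / sqrt (z + 1)) (at y)"
      unfolding G_def by (intro DERIV_cdivide DERIV_cmult)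
    moreover have "- 2 * P * (inverse (sqrt (z + 1 - y)) / 2 * (0 - 1)) / sqrt (z + 1) =
        P / (sqrt (z + 1) * sqrt (z + 1 - y))"
      by (simp add: field_simps)
    ultimately show ?thesis
      by (simp add: real_sqrt_mult)
  qed
  then have integral: "((\<lambda>y. P / sqrt ((z + 1) * (z + 1 - y))) has_integral (G (z - 1) - G 0)) {0..z - 1}"
    using assms(1)
    by (intro fundamental_theorem_of_calculus)
      (auto simp: has_real_derivative_iff_has_vector_derivative[symmetric] intro: has_field_derivative_at_within)
  have "(\<integral>\<^sup>+ y \<in> {0..z - 1}. ennreal (P / sqrt ((z + 1) * (z + 1 - y))) \<partial>lborel) = ennreal (G (z - 1) - G 0)"
    by (rule nn_integral_has_integral_lebesgue'[OF _ integral]) (use assms in auto)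
  also have "G (z - 1) - G 0 = 2 * P - 2 * P * sqrt 2 / sqrt (z + 1)"
    unfolding G_def using assms by (simp add: field_simps)
  also have "\<dots> \<le> 2 * P"
    using assms by simp
  finally show ?thesis
    by (simp add: ennreal_leI)
qed

lemma nn_integral_kernel_le:
  fixes f :: "complex \<Rightarrow> complex" and z P :: real
  assumes z: "1 \<le> z" and f: "\<And>x::real. 0 \<le> x \<Longrightarrow> x \<le> 1 - 1/z \<Longrightarrow> norm (f (of_real x)) \<le> P"
  shows "(\<integral>\<^sup>+ y \<in> {0..z - 1}. ennreal (cmod (complex_of_real (((1 + z)\<^sup>2 - y\<^sup>2) powr (-1/2)) *
      f (complex_of_real (((z - 1)\<^sup>2 - y\<^sup>2) / ((z + 1)\<^sup>2 - y\<^sup>2))))) \<partial>lborel) \<le> ennreal (2 * P)"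
proof -
  have "0 \<le> P"
    using order_trans[OF norm_ge_zero f[of 0]] z by simp
  define h where "h y = cmod (complex_of_real (((1 + z)\<^sup>2 - y\<^sup>2) powr (-1/2)) *
      f (complex_of_real (((z - 1)\<^sup>2 - y\<^sup>2) / ((z + 1)\<^sup>2 - y\<^sup>2))))" for y
  have pointwise: "h y \<le> P / sqrt ((z + 1) * (z + 1 - y))" if y: "0 \<le> y" "y \<le> z - 1" for y
  proof -
    have "y * y \<le> y * (z + 1)"
      using y by (intro mult_left_mono) auto
    then have "(z + 1) * (z + 1 - y) \<le> (1 + z)\<^sup>2 - y\<^sup>2"
      by (simp add: power2_eq_square algebra_simps)
    moreover have "0 < (z + 1) * (z + 1 - y)"
      using y z by simp
    ultimately have kernel: "((1 + z)\<^sup>2 - y\<^sup>2) powr (-1/2) \<le> 1 / sqrt ((z + 1) * (z + 1 - y))"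
      by (simp add: powr_minus_divide powr_half_sqrt frac_le)
    have "h y \<le> ((1 + z)\<^sup>2 - y\<^sup>2) powr (-1/2) * P"
      unfolding h_def using f[OF hyp2F1_argument_bounds[OF z y]] by (simp add: norm_mult mult_left_mono)
    also have "\<dots> \<le> 1 / sqrt ((z + 1) * (z + 1 - y)) * P"
      by (rule mult_right_mono[OF kernel \<open>0 \<le> P\<close>])
    finally show ?thesis
      by simp
  qed
  have "(\<integral>\<^sup>+ y \<in> {0..z - 1}. ennreal (h y) \<partial>lborel) \<le>
      (\<integral>\<^sup>+ y \<in> {0..z - 1}. ennreal (P / sqrt ((z + 1) * (z + 1 - y))) \<partial>lborel)"
    by (intro nn_integral_mono) (auto split: split_indicator intro!: ennreal_leI pointwise)
  also have "\<dots> \<le> ennreal (2 * P)"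
    by (rule nn_integral_inverse_sqrt_le[OF z \<open>0 \<le> P\<close>])
  finally show ?thesis
    unfolding h_def .
qed

theorem lemma3p2:
  fixes l m\<^sub>c :: real
  assumes "l > 1" and "m\<^sub>c \<ge> 0" and "4 * m\<^sub>c ^ 2 \<ge> (3 * l - 1) ^ 2"
  defines "M \<equiv> sqrt (4 * m\<^sub>c ^ 2 - (1 - 3 * l) ^ 2) / (2 * (l - 1))"
  shows "\<exists>C::real. \<forall>z::real. z \<ge> 1 \<longrightarrow>
    (\<integral>\<^sup>+ y \<in> {0..z - 1}.
        ennreal (cmod (complex_of_real (((1 + z) ^ 2 - y ^ 2) powr (-1/2)) *
          hyp2F1 (1/2 + \<i> * complex_of_real M) (1/2 + \<i> * complex_of_real M) 1
            (complex_of_real (((z - 1) ^ 2 - y ^ 2) / ((z + 1) ^ 2 - y ^ 2))))) \<partial>lborel)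
    \<le> ennreal (C * (1 + ln z) powr (1 - sgn M))"
proof -
  \<comment> \<open>Only the sign of \<open>M\<close> enters.\<close>
  have "(1 - 3 * l)\<^sup>2 = (3 * l - 1)\<^sup>2"
    by (simp add: power2_commute)
  then have "M \<ge> 0"
    unfolding M_def using assms(1,3) by simp
  then obtain A where A: "\<And>z x. 1 \<le> z \<Longrightarrow> 0 \<le> x \<Longrightarrow> x \<le> 1 - 1/z \<Longrightarrow>
      norm (hyp2F1 (1/2 + \<i> * of_real M) (1/2 + \<i> * of_real M) 1 (of_real x)) \<le> A * (1 + ln z) powr (1 - sgn M)"
    using norm_hyp2F1_critical_line_le by blast
  show ?thesis
    using nn_integral_kernel_le[where f = "hyp2F1 (1/2 + \<i> * of_real M) (1/2 + \<i> * of_real M) 1", OF _ A]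
    by (intro exI[of _ "2 * A"]) (simp add: mult.assoc)
qed

end
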